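(* Let $\mathcal{G}$ be a Grothendieck category, $X\in\mathcal{G}$, $\sigma$ an ordinal, $(X_\alpha\mid\alpha\le\sigma)$ a chain of subobjects of $X$ with $X_0=0$, $X_\sigma=X$, $X_\mu=\bigcup_{\alpha<\mu}X_\alpha$ for limit $\mu\le\sigma$, and let $(A_\alpha\mid\alpha<\sigma)$ be subobjects of $X$ with $X_{\alpha+1}=X_\alpha+A_\alpha$ for all $\alpha<\sigma$. If $(S_i\mid i\in I)$ is a family of closed subsets of $\sigma$, then $\ell\big(\bigcap_{i\in I}S_i\big)=\bigcap_{i\in I}\ell(S_i)$.
   Context: For $S\subseteq\sigma$ (with $\sigma$ identified with the set of ordinals $<\sigma$), $\ell(S)=\sum_{\alpha\in S}A_\alpha\in\mathrm{Subobj}(X)$. A subset $S\subseteq\sigma$ is called closed if every $\alpha\in S$ satisfies $X_\alpha\cap A_\alpha\subseteq\sum_{\gamma\in S,\,\gamma<\alpha}A_\gamma$. Sums, intersections and direct unions are taken in the lattice $\mathrm{Subobj}(X)$ of subobjects of $X$. *)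

theory Defs
  imports Main
begin

text \<open>The lattice Subobj(X) of subobjects of an object X of a Grothendieck category
  is modelled abstractly by a complete lattice type 'a (bot = 0, top = X) which is
  modular and upper continuous (AB5: meets distribute over direct unions).\<close>

definition modular_lattice :: "'a::complete_lattice itself \<Rightarrow> bool" where
  "modular_lattice _ \<longleftrightarrow>
     (\<forall>a b c :: 'a. a \<le> c \<longrightarrow> sup a (inf b c) = inf (sup a b) c)"

definition directed_set :: "'a::order set \<Rightarrow> bool" where
  "directed_set D \<longleftrightarrow> (\<forall>x\<in>D. \<forall>y\<in>D. \<exists>z\<in>D. x \<le> z \<and> y \<le> z)"

definition upper_continuous :: "'a::complete_lattice itself \<Rightarrow> bool" where
  "upper_continuous _ \<longleftrightarrow>
     (\<forall>(a::'a) D. directed_set D \<longrightarrow> inf a (Sup D) = (SUP d\<in>D. inf a d))"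

text \<open>Ordinals \<le> sigma are modelled as the initial segment {..s} of a well-ordered type.\<close>

definition ozero :: "'o::wellorder" where
  "ozero = (LEAST b. True)"

definition osucc :: "'o::wellorder \<Rightarrow> 'o" where
  "osucc a = (LEAST b. a < b)"

definition is_limit :: "'o::wellorder \<Rightarrow> bool" where
  "is_limit m \<longleftrightarrow> (\<exists>b. b < m) \<and> (\<forall>b<m. osucc b < m)"

definition ell :: "('o \<Rightarrow> 'a::complete_lattice) \<Rightarrow> 'o set \<Rightarrow> 'a" where
  "ell A S = Sup (A ` S)"

definition closed_set :: "('o::wellorder \<Rightarrow> 'a::complete_lattice) \<Rightarrow> ('o \<Rightarrow> 'a) \<Rightarrow> 'o set \<Rightarrow> bool" where
  "closed_set X A S \<longleftrightarrow> (\<forall>a\<in>S. inf (X a) (A a) \<le> Sup (A ` {g\<in>S. g < a}))"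

end

theory Submission
  imports Defs
begin

(* Write T for the intersection of the closed sets S_i and Y for the meet
   of the sums ell(S_i).  The inequality ell(T) <= Y is immediate; for the converse we
   show by transfinite induction on beta <= sigma that
       X_beta /\ Y <= ell(T /\ [0,beta)),
   which for beta = sigma (X_sigma = top) is the claim.  At a successor beta = c+1:
   if c lies in every S_i, the modular law gives X_(c+1) /\ Y = A_c \/ (X_c /\ Y);
   otherwise c is missing from some closed S_j, and closedness of S_j forces
   X_(c+1) /\ ell(S_j) <= X_c, so nothing new appears.  At limits one uses upper
   continuity (AB5).  The key auxiliary fact, proved first by the same kind of
   induction, is that a closed set S satisfies X_alpha /\ ell(S /\ [0,beta)) <=
   ell(S /\ [0,alpha)) for alpha <= beta <= sigma.
   The file first collects facts about successors and limits in a well-order, about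
   modular upper continuous lattices and about ell, then proves the two inductions
   inside a context carrying the hypotheses on the filtration X and the family A. *)

lemma osucc_greater:
  fixes c b :: "'o::wellorder"
  shows "c < b \<Longrightarrow> c < osucc c"
  unfolding osucc_def by (rule LeastI)

lemma osucc_least:
  fixes c b :: "'o::wellorder"
  shows "c < b \<Longrightarrow> osucc c \<le> b"
  unfolding osucc_def by (rule Least_le)

lemma lessThan_osucc:
  fixes c b :: "'o::wellorder"
  assumes "c < b"
  shows "{..<osucc c} = insert c {..<c}"
proof -
  have "d < osucc c \<longleftrightarrow> d \<le> c" for d
    using osucc_greater[OF assms] osucc_least[of c d] by (auto simp: not_le[symmetric])
  then show ?thesis by (auto simp: le_less)
qed

lemma ozero_le: "ozero \<le> (x::'o::wellorder)"
  unfolding ozero_def by (rule Least_le) simp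

lemma limit_osucc_less: "is_limit b \<Longrightarrow> g < b \<Longrightarrow> osucc g < b"
  unfolding is_limit_def by blast

lemma ord_cases:
  fixes b :: "'o::wellorder"
  obtains "b = ozero" | c where "c < b" "b = osucc c" | "is_limit b"
proof -
  consider "b = ozero" | "ozero < b" using ozero_le[of b] by force
  then show ?thesis
  proof cases
    case 2
    show ?thesis
    proof (cases "is_limit b")
      case False
      with 2 obtain c where c: "c < b" "\<not> osucc c < b" unfolding is_limit_def by blast
      then have "b = osucc c" using osucc_least[OF c(1)] by simp
      with c(1) that(2) show ?thesis by blast
    qed (use that in blast)
  qed (use that in blast)
qed

lemma modular_law:
  fixes a b c :: "'a::complete_lattice"
  assumes "modular_lattice TYPE('a)" and "a \<le> c"
  shows "sup a (inf b c) = inf (sup a b) c"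
  using assms unfolding modular_lattice_def by blast

lemma upper_continuous_inf_Sup:
  fixes a :: "'a::complete_lattice"
  assumes "upper_continuous TYPE('a)" and "directed_set D"
  shows "inf a (Sup D) = (SUP d\<in>D. inf a d)"
  using assms unfolding upper_continuous_def by blast

lemma directed_image_lessThan:
  fixes f :: "'o::wellorder \<Rightarrow> 'a::order"
  assumes "\<And>g h. h < b \<Longrightarrow> g \<le> h \<Longrightarrow> f g \<le> f h"
  shows "directed_set (f ` {..<b})"
  unfolding directed_set_def
proof (intro ballI)
  fix x y assume "x \<in> f ` {..<b}" "y \<in> f ` {..<b}"
  then obtain g h where "g < b" "h < b" "x = f g" "y = f h" by auto
  then show "\<exists>z\<in>f ` {..<b}. x \<le> z \<and> y \<le> z"
    by (intro bexI[of _ "f (max g h)"]) (auto intro!: assms simp: less_max_iff_disj)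
qed

lemma ell_mono: "T \<subseteq> U \<Longrightarrow> ell A T \<le> ell A U"
  unfolding ell_def by (rule Sup_subset_mono) blast

lemma ell_upper: "g \<in> T \<Longrightarrow> A g \<le> ell A T"
  unfolding ell_def by (rule Sup_upper) blast

lemma ell_insert: "ell A (insert c T) = sup (A c) (ell A T)"
  unfolding ell_def by simp

lemma ell_limit:
  assumes "is_limit b"
  shows "ell A (S \<inter> {..<b}) = (SUP g\<in>{..<b}. ell A (S \<inter> {..<g}))"
proof (rule antisym)
  show "ell A (S \<inter> {..<b}) \<le> (SUP g\<in>{..<b}. ell A (S \<inter> {..<g}))"
    unfolding ell_def[of A "S \<inter> {..<b}"]
  proof (rule Sup_least)
    fix x assume "x \<in> A ` (S \<inter> {..<b})"
    then obtain g where g: "g \<in> S" "g < b" "x = A g" by auto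
    then have "x \<le> ell A (S \<inter> {..<osucc g})"
      using osucc_greater[OF g(2)] by (auto intro: ell_upper)
    also have "\<dots> \<le> (SUP g\<in>{..<b}. ell A (S \<inter> {..<g}))"
      using limit_osucc_less[OF assms g(2)] by (auto intro: SUP_upper)
    finally show "x \<le> (SUP g\<in>{..<b}. ell A (S \<inter> {..<g}))" .
  qed
  show "(SUP g\<in>{..<b}. ell A (S \<inter> {..<g})) \<le> ell A (S \<inter> {..<b})"
    by (rule SUP_least) (auto intro!: ell_mono)
qed

context
  fixes X A :: "'o::wellorder \<Rightarrow> 'a::complete_lattice" and s :: 'o
  assumes modular: "modular_lattice TYPE('a)"
    and ab5: "upper_continuous TYPE('a)"
    and chain: "mono_on {..s} X"
    and Xsucc: "\<And>a. a < s \<Longrightarrow> X (osucc a) = sup (X a) (A a)"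
begin

lemma X_mono: "a \<le> b \<Longrightarrow> b \<le> s \<Longrightarrow> X a \<le> X b"
  by (intro mono_onD[OF chain]) auto

lemma ell_le_X:
  assumes "al \<le> s"
  shows "ell A (S \<inter> {..<al}) \<le> X al"
  unfolding ell_def
proof (rule Sup_least)
  fix x assume "x \<in> A ` (S \<inter> {..<al})"
  then obtain g where g: "g < al" "x = A g" by auto
  then have "x \<le> X (osucc g)" using Xsucc[of g] assms by simp
  also have "\<dots> \<le> X al" using osucc_least[OF g(1)] assms by (rule X_mono)
  finally show "x \<le> X al" .
qed

text \<open>Closedness at c means that adjoining A_c to the sum over S below c adds nothing
  inside X_c.\<close>

lemma closed_set_succ_step:
  assumes cl: "closed_set X A S" and c: "c < s"
  shows "inf (X c) (ell A (S \<inter> {..<osucc c})) = ell A (S \<inter> {..<c})"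
proof (cases "c \<in> S")
  case True
  let ?L = "ell A (S \<inter> {..<c})"
  have "S \<inter> {..<osucc c} = insert c (S \<inter> {..<c})"
    using True lessThan_osucc[OF c] by auto
  then have "inf (X c) (ell A (S \<inter> {..<osucc c})) = inf (sup ?L (A c)) (X c)"
    by (simp add: ell_insert inf_commute sup_commute)
  also have "\<dots> = sup ?L (inf (A c) (X c))"
    using modular_law[OF modular ell_le_X] c by simp
  also have "inf (A c) (X c) \<le> ?L"
    using cl True unfolding closed_set_def ell_def by (auto simp: inf_commute Int_def)
  then have "sup ?L (inf (A c) (X c)) = ?L" by (rule sup_absorb1)
  finally show ?thesis .
next
  case False
  then have "S \<inter> {..<osucc c} = S \<inter> {..<c}" using lessThan_osucc[OF c] by auto
  then show ?thesis using ell_le_X[of c S] c by (simp add: inf_absorb2)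
qed

lemma closed_set_trace:
  assumes cl: "closed_set X A S"
  shows "be \<le> s \<Longrightarrow> al \<le> be \<Longrightarrow> inf (X al) (ell A (S \<inter> {..<be})) \<le> ell A (S \<inter> {..<al})"
proof (induction be arbitrary: al rule: less_induct)
  case (less be)
  show ?case
  proof (cases "al = be")
    case False
    with less.prems have al_be: "al < be" by simp
    show ?thesis
    proof (cases be rule: ord_cases)
      case 1
      then show ?thesis using al_be ozero_le[of al] by simp
    next
      case (2 c)
      have cs: "c < s" using 2 less.prems by simp
      have "al \<in> insert c {..<c}" using al_be 2 lessThan_osucc[OF cs] by blast
      then have al_c: "al \<le> c" by auto
      have "inf (X al) (X c) = X al" using X_mono[OF al_c] cs by (simp add: inf_absorb1)
      then have "inf (X al) (ell A (S \<inter> {..<be}))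
          = inf (X al) (inf (X c) (ell A (S \<inter> {..<osucc c})))"
        using 2 by (metis inf.assoc)
      also have "\<dots> = inf (X al) (ell A (S \<inter> {..<c}))"
        using closed_set_succ_step[OF cl cs] by simp
      also have "\<dots> \<le> ell A (S \<inter> {..<al})"
        using less.IH[OF 2(1)] al_c cs by simp
      finally show ?thesis .
    next
      case 3
      let ?f = "\<lambda>g. ell A (S \<inter> {..<g})"
      have dir: "directed_set (?f ` {..<be})"
        by (rule directed_image_lessThan) (auto intro!: ell_mono)
      have "inf (X al) (ell A (S \<inter> {..<be})) = (SUP g\<in>{..<be}. inf (X al) (?f g))"
        by (simp only: ell_limit[OF 3] upper_continuous_inf_Sup[OF ab5 dir] image_image)
      also have "\<dots> \<le> ?f al"
      proof (rule SUP_least)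
        fix g assume g: "g \<in> {..<be}"
        show "inf (X al) (?f g) \<le> ?f al"
        proof (cases "al \<le> g")
          case True
          then show ?thesis using less.IH[of g al] g less.prems by simp
        next
          case False
          then have "?f g \<le> ?f al" by (auto intro!: ell_mono)
          then show ?thesis by (rule inf.coboundedI2)
        qed
      qed
      finally show ?thesis .
    qed
  qed simp
qed

lemma meet_succ_step:
  fixes S :: "'i \<Rightarrow> 'o set"
  assumes Ssub: "\<And>i. i \<in> I \<Longrightarrow> S i \<subseteq> {..<s}"
    and Sclosed: "\<And>i. i \<in> I \<Longrightarrow> closed_set X A (S i)"
    and c: "c < s"
    and IH: "inf (X c) Y \<le> ell A ((\<Inter>i\<in>I. S i) \<inter> {..<c})"
    and Y: "Y = (INF i\<in>I. ell A (S i))"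
  shows "inf (X (osucc c)) Y \<le> ell A ((\<Inter>i\<in>I. S i) \<inter> {..<osucc c})"
proof -
  let ?T = "\<Inter>i\<in>I. S i"
  have T_mono: "ell A (?T \<inter> {..<c}) \<le> ell A (?T \<inter> {..<osucc c})"
    using lessThan_osucc[OF c] by (intro ell_mono) auto
  show ?thesis
  proof (cases "\<forall>i\<in>I. c \<in> S i")
    case True
    have "A c \<le> Y" unfolding Y using True by (auto intro!: INF_greatest ell_upper)
    then have "inf (X (osucc c)) Y = sup (A c) (inf (X c) Y)"
      using modular_law[OF modular, where a = "A c" and b = "X c" and c = Y] Xsucc[OF c]
      by (simp add: sup_commute)
    moreover have "A c \<le> ell A (?T \<inter> {..<osucc c})"
      using True lessThan_osucc[OF c] by (intro ell_upper) auto
    ultimately show ?thesis using IH T_mono by simp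
  next
    case False
    then obtain j where j: "j \<in> I" "c \<notin> S j" by blast
    have "S j \<inter> {..<s} = S j" using Ssub[OF j(1)] by auto
    then have "inf (X (osucc c)) (ell A (S j)) \<le> ell A (S j \<inter> {..<osucc c})"
      using closed_set_trace[OF Sclosed[OF j(1)], of s "osucc c"] osucc_least[OF c] by simp
    also have "\<dots> = ell A (S j \<inter> {..<c})" using lessThan_osucc[OF c] j(2) by auto
    also have "\<dots> \<le> X c" using c by (intro ell_le_X) simp
    finally have step: "inf (X (osucc c)) (ell A (S j)) \<le> X c" .
    have "Y \<le> ell A (S j)" unfolding Y using j(1) by (rule INF_lower)
    then have "inf (X (osucc c)) Y \<le> inf (X (osucc c)) (ell A (S j))"
      by (rule inf_mono[OF order_refl])
    then have "inf (X (osucc c)) Y \<le> X c" using step by (rule order_trans)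
    then have "inf (X (osucc c)) Y \<le> inf (X c) Y" by simp
    also note IH
    also note T_mono
    finally show ?thesis .
  qed
qed

lemma meet_below:
  fixes S :: "'i \<Rightarrow> 'o set"
  assumes X0: "X ozero = bot"
    and Xlim: "\<And>m. m \<le> s \<Longrightarrow> is_limit m \<Longrightarrow> X m = (SUP a\<in>{..<m}. X a)"
    and Ssub: "\<And>i. i \<in> I \<Longrightarrow> S i \<subseteq> {..<s}"
    and Sclosed: "\<And>i. i \<in> I \<Longrightarrow> closed_set X A (S i)"
  shows "be \<le> s \<Longrightarrow>
    inf (X be) (INF i\<in>I. ell A (S i)) \<le> ell A ((\<Inter>i\<in>I. S i) \<inter> {..<be})"
proof (induction be rule: less_induct)
  case (less be)
  let ?Y = "INF i\<in>I. ell A (S i)" and ?T = "\<Inter>i\<in>I. S i"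
  show ?case
  proof (cases be rule: ord_cases)
    case 1
    then show ?thesis using X0 by simp
  next
    case (2 c)
    have c: "c < s" using 2 less.prems by simp
    have "inf (X c) ?Y \<le> ell A (?T \<inter> {..<c})" using less.IH[OF 2(1)] c by simp
    from meet_succ_step[OF Ssub Sclosed c this refl] show ?thesis using 2 by simp
  next
    case 3
    have dir: "directed_set (X ` {..<be})"
      using less.prems by (intro directed_image_lessThan X_mono) auto
    have "inf (X be) ?Y = inf ?Y (Sup (X ` {..<be}))"
      using Xlim[OF less.prems 3] by (simp add: inf_commute)
    also have "\<dots> = (SUP g\<in>{..<be}. inf ?Y (X g))"
      using upper_continuous_inf_Sup[OF ab5 dir] by (simp add: image_image)
    also have "\<dots> \<le> ell A (?T \<inter> {..<be})"
    proof (rule SUP_least)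
      fix g assume g: "g \<in> {..<be}"
      then have "inf ?Y (X g) \<le> ell A (?T \<inter> {..<g})"
        using less.IH[of g] less.prems by (simp add: inf_commute)
      also have "\<dots> \<le> ell A (?T \<inter> {..<be})" using g by (intro ell_mono) auto
      finally show "inf ?Y (X g) \<le> ell A (?T \<inter> {..<be})" .
    qed
    finally show ?thesis .
  qed
qed

end

theorem lemma2p4:
  fixes X A :: "'o::wellorder \<Rightarrow> 'a::complete_lattice"
    and s :: 'o
    and S :: "'i \<Rightarrow> 'o set"
    and I :: "'i set"
  assumes modular: "modular_lattice TYPE('a)"
    and ab5: "upper_continuous TYPE('a)"
    and chain: "mono_on {..s} X"
    and X0: "X ozero = bot"
    and Xs: "X s = top"
    and Xlim: "\<And>m. m \<le> s \<Longrightarrow> is_limit m \<Longrightarrow> X m = (SUP a\<in>{..<m}. X a)"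
    and Xsucc: "\<And>a. a < s \<Longrightarrow> X (osucc a) = sup (X a) (A a)"
    and Ssub: "\<And>i. i \<in> I \<Longrightarrow> S i \<subseteq> {..<s}"
    and Sclosed: "\<And>i. i \<in> I \<Longrightarrow> closed_set X A (S i)"
  shows "ell A ({..<s} \<inter> (\<Inter>i\<in>I. S i)) = (INF i\<in>I. ell A (S i))"
proof (rule antisym)
  show "ell A ({..<s} \<inter> (\<Inter>i\<in>I. S i)) \<le> (INF i\<in>I. ell A (S i))"
    by (rule INF_greatest) (auto intro!: ell_mono)
  show "(INF i\<in>I. ell A (S i)) \<le> ell A ({..<s} \<inter> (\<Inter>i\<in>I. S i))"
  proof -
    have "inf (X s) (INF i\<in>I. ell A (S i)) \<le> ell A ((\<Inter>i\<in>I. S i) \<inter> {..<s})"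
      by (rule meet_below[OF modular ab5 chain Xsucc X0 Xlim Ssub Sclosed order_refl])
    then show ?thesis using Xs by (simp only: inf_top_left Int_commute)
  qed
qed

end
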